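(* Let $G_1$ be a connected graph on $n_1$ vertices, and let $G_2$ be an $r_2$-regular graph with $r_2\ge1$, on $n_2$ vertices and $m_2$ edges, with adjacency matrix $A_{G_2}$ and Laplacian eigenvalues $\mu_1(G_2),\dots,\mu_{n_2}(G_2)$. Let $C=L_{G_2}+r_2I_{n_2}$. Then \begin{align*} Kf(G_1\star G_2)&=n_1(1+n_2+m_2)\Big[\frac{n_1m_2}{3}+\frac{n_1}{3}\Big(\mathrm{tr}(C^{-1}A_{G_2})+r_2\sum_{i=1}^{n_2}\frac{1}{\mu_i(G_2)+r_2}\Big)+3n_1\sum_{i=1}^{n_2}\frac{1}{\mu_i(G_2)+r_2}\\ &\qquad+\frac{m_2+n_2+1}{n_1}Kf(G_1)\Big]-\frac{n_1m_2r_2+n_1n_2(r_2+3)^2}{3r_2}. \end{align*}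
   Context: All graphs are simple and undirected; $L_G=D_G-A_G$ is the Laplacian matrix. The resistance distance between two vertices of a connected graph is the effective resistance between them when every edge is a unit resistor, and the Kirchhoff index $Kf(G)$ of a connected graph is the sum of resistance distances over all unordered pairs of distinct vertices. The corona-edge of the subdivision graph $G_1\star G_2$ is obtained from $G_1$ and $|V(G_1)|$ vertex-disjoint copies of the subdivision graph $S(G_2)$ (the graph obtained from $G_2$ by inserting a new vertex into every edge; the inserted vertices are the subdivision vertices) by joining the $i$-th vertex of $G_1$ to every subdivision vertex of the $i$-th copy. It has $n_1(1+n_2+m_2)$ vertices. *)

theory Defs
  imports "Jordan_Normal_Form.Gauss_Jordan_Elimination" "Jordan_Normal_Form.Char_Poly"
begin

definition simple_graph :: "'a set \<Rightarrow> 'a set set \<Rightarrow> bool" where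
  "simple_graph V E \<longleftrightarrow> finite V \<and> E \<subseteq> {{u, v} | u v. u \<in> V \<and> v \<in> V \<and> u \<noteq> v}"

definition gdegree :: "'a set \<Rightarrow> 'a set set \<Rightarrow> 'a \<Rightarrow> nat" where
  "gdegree V E v = card {u \<in> V. {u, v} \<in> E}"

definition regular_graph :: "'a set \<Rightarrow> 'a set set \<Rightarrow> nat \<Rightarrow> bool" where
  "regular_graph V E r \<longleftrightarrow> (\<forall>v\<in>V. gdegree V E v = r)"

definition connected_graph :: "'a set \<Rightarrow> 'a set set \<Rightarrow> bool" where
  "connected_graph V E \<longleftrightarrow> V \<noteq> {} \<and>
     (\<forall>u\<in>V. \<forall>v\<in>V. (\<lambda>x y. {x, y} \<in> E)\<^sup>*\<^sup>* u v)"

definition laplacian :: "'a set \<Rightarrow> 'a set set \<Rightarrow> 'a \<Rightarrow> 'a \<Rightarrow> real" where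
  "laplacian V E u v =
     (if u = v then real (gdegree V E u) else if {u, v} \<in> E then -1 else 0)"

text \<open>Effective resistance with unit resistors: inject a unit current at u and
  extract it at v; the resulting potential vector x satisfies L x = e_u - e_v
  (Kirchhoff's current law + Ohm's law), and the resistance is the potential
  difference x u - x v.\<close>
definition resistance :: "'a set \<Rightarrow> 'a set set \<Rightarrow> 'a \<Rightarrow> 'a \<Rightarrow> real" where
  "resistance V E u v = (THE r. \<exists>x :: 'a \<Rightarrow> real.
      (\<forall>w\<in>V. (\<Sum>y\<in>V. laplacian V E w y * x y) =
               (if w = u then 1 else 0) - (if w = v then 1 else 0))
      \<and> r = x u - x v)"

definition kirchhoff :: "'a set \<Rightarrow> 'a set set \<Rightarrow> real" where
  "kirchhoff V E = (\<Sum>p\<in>{(u, v). u \<in> V \<and> v \<in> V \<and> u \<noteq> v}. resistance V E (fst p) (snd p)) / 2"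

text \<open>Vertices: Inl i for vertices i of G1;
  Inr (i, Inl v) the copy of vertex v of G2 in the i-th copy of S(G2);
  Inr (i, Inr e) the subdivision vertex of edge e in the i-th copy.\<close>
definition corona_edge_V :: "'a set \<Rightarrow> 'b set \<Rightarrow> 'b set set \<Rightarrow> ('a + ('a \<times> ('b + 'b set))) set" where
  "corona_edge_V V1 V2 E2 =
     Inl ` V1 \<union> {Inr (i, Inl v) | i v. i \<in> V1 \<and> v \<in> V2}
             \<union> {Inr (i, Inr e) | i e. i \<in> V1 \<and> e \<in> E2}"

definition corona_edge_E :: "'a set \<Rightarrow> 'a set set \<Rightarrow> 'b set \<Rightarrow> 'b set set
    \<Rightarrow> ('a + ('a \<times> ('b + 'b set))) set set" where
  "corona_edge_E V1 E1 V2 E2 =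
     {{Inl a, Inl b} | a b. {a, b} \<in> E1}
     \<union> {{Inr (i, Inl v), Inr (i, Inr e)} | i v e. i \<in> V1 \<and> e \<in> E2 \<and> v \<in> e}
     \<union> {{Inl i, Inr (i, Inr e)} | i e. i \<in> V1 \<and> e \<in> E2}"

definition adj_matrix :: "nat \<Rightarrow> nat set set \<Rightarrow> real mat" where
  "adj_matrix n E = mat n n (\<lambda>(i, j). if {i, j} \<in> E then 1 else 0)"

definition lap_matrix :: "nat \<Rightarrow> nat set set \<Rightarrow> real mat" where
  "lap_matrix n E = mat n n (\<lambda>(i, j). laplacian {0..<n} E i j)"

definition mat_trace :: "real mat \<Rightarrow> real" where
  "mat_trace A = (\<Sum>i<dim_row A. A $$ (i, i))"

end

theory Submission
  imports Defs "Jordan_Normal_Form.Schur_Decomposition"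
begin

text \<open>Every vertex i of G1 carries a pendant copy of S(G2) together with i itself as root.
  If a unit current enters at node a of the copy at i and leaves at node b of the copy at j,
  the potential is the G1-potential between i and j, corrected inside the two copies by the
  Green function of a copy grounded at its root. Hence
  R(a_i, b_j) = R_G1(i, j) + M(a, a) + M(b, b) - [i = j] (M(a, b) + M(b, a)),
  and summing over all pairs expresses Kf in terms of Kf(G1), the trace of M and the sum of
  all entries of M. Writing M blockwise through C^-1 and the incidence matrix B of G2, these
  reduce to tr C^-1, tr(C^-1 A) and the row sums 1/r2 of C^-1, using B B^T = r2 I + A; finally
  tr C^-1 = \<Sum> 1/(\<mu>_i + r2) by triangularising L.\<close>

section \<open>Potentials and effective resistance\<close>

definition neighbours :: "'v set \<Rightarrow> 'v set set \<Rightarrow> 'v \<Rightarrow> 'v set" where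
  "neighbours V E w = {u\<in>V. {u, w} \<in> E}"

definition lap_apply :: "'v set \<Rightarrow> 'v set set \<Rightarrow> ('v \<Rightarrow> real) \<Rightarrow> 'v \<Rightarrow> real" where
  "lap_apply V E x w = (\<Sum>y\<in>V. laplacian V E w y * x y)"

lemma simple_graph_finite: "simple_graph V E \<Longrightarrow> finite V"
  by (simp add: simple_graph_def)

lemma simple_graph_edge:
  "simple_graph V E \<Longrightarrow> e \<in> E \<Longrightarrow> \<exists>u v. e = {u, v} \<and> u \<in> V \<and> v \<in> V \<and> u \<noteq> v"
  unfolding simple_graph_def by blast

lemma simple_graph_no_loop: "simple_graph V E \<Longrightarrow> {w, w} \<notin> E"
  using simple_graph_edge[of V E "{w, w}"] by (auto simp: doubleton_eq_iff)

lemma simple_graph_edge_vertices: "simple_graph V E \<Longrightarrow> {a, b} \<in> E \<Longrightarrow> a \<in> V \<and> b \<in> V"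
  using simple_graph_edge[of V E "{a, b}"] by (auto simp: doubleton_eq_iff)

lemma finite_neighbours: "simple_graph V E \<Longrightarrow> finite (neighbours V E w)"
  unfolding neighbours_def using simple_graph_finite[of V E] by auto

lemma lap_apply_neighbours:
  assumes G: "simple_graph V E" and w: "w \<in> V"
  shows "lap_apply V E x w = (\<Sum>u\<in>neighbours V E w. x w - x u)"
proof -
  have fin: "finite V" using G simple_graph_finite by auto
  have "lap_apply V E x w = laplacian V E w w * x w + (\<Sum>y\<in>V-{w}. laplacian V E w y * x y)"
    unfolding lap_apply_def using sum.remove[OF fin w] by simp
  also have "laplacian V E w w = real (card (neighbours V E w))"
    by (simp add: laplacian_def gdegree_def neighbours_def)
  also have "(\<Sum>y\<in>V-{w}. laplacian V E w y * x y) = (\<Sum>y\<in>V-{w}. if {y, w} \<in> E then - x y else 0)"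
    by (rule sum.cong) (auto simp: laplacian_def insert_commute)
  also have "\<dots> = (\<Sum>y\<in>{y\<in>V-{w}. {y, w} \<in> E}. - x y)"
    by (rule sym, rule sum.inter_filter) (use fin in auto)
  also have "{y\<in>V-{w}. {y, w} \<in> E} = neighbours V E w"
    using simple_graph_no_loop[OF G, of w] by (auto simp: neighbours_def)
  finally show ?thesis
    by (simp add: sum_subtractf sum_negf)
qed

lemma sum_neighbours_swap:
  assumes G: "simple_graph V E"
  shows "(\<Sum>w\<in>V. \<Sum>u\<in>neighbours V E w. f w u) = (\<Sum>w\<in>V. \<Sum>u\<in>neighbours V E w. f u w)"
proof -
  have as_if: "(\<Sum>u\<in>neighbours V E w. g u) = (\<Sum>u\<in>V. if {u, w} \<in> E then g u else 0)" for g w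
    using simple_graph_finite[OF G] by (simp add: neighbours_def sum.inter_filter)
  have "(\<Sum>w\<in>V. \<Sum>u\<in>V. if {u, w} \<in> E then f w u else 0)
      = (\<Sum>w\<in>V. \<Sum>u\<in>V. if {u, w} \<in> E then f u w else 0)"
    by (subst sum.swap) (simp add: insert_commute)
  then show ?thesis by (simp add: as_if)
qed

lemma lap_quadratic_form:
  assumes G: "simple_graph V E"
  shows "(\<Sum>w\<in>V. x w * lap_apply V E x w) = (\<Sum>w\<in>V. \<Sum>u\<in>neighbours V E w. (x w - x u)^2) / 2"
proof -
  have A: "(\<Sum>w\<in>V. x w * lap_apply V E x w) = (\<Sum>w\<in>V. \<Sum>u\<in>neighbours V E w. x w * (x w - x u))"
    by (rule sum.cong) (auto simp: lap_apply_neighbours[OF G] sum_distrib_left)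
  also have "\<dots> = (\<Sum>w\<in>V. \<Sum>u\<in>neighbours V E w. x u * (x u - x w))"
    by (rule sum_neighbours_swap[OF G])
  finally have B: "(\<Sum>w\<in>V. x w * lap_apply V E x w) = \<dots>" .
  have "2 * (\<Sum>w\<in>V. x w * lap_apply V E x w)
      = (\<Sum>w\<in>V. \<Sum>u\<in>neighbours V E w. x w * (x w - x u) + x u * (x u - x w))"
    using A B by (simp add: sum.distrib)
  also have "\<dots> = (\<Sum>w\<in>V. \<Sum>u\<in>neighbours V E w. (x w - x u)^2)"
    by (intro sum.cong refl) (simp add: power2_eq_square algebra_simps)
  finally show ?thesis by simp
qed

lemma const_if_zero_edge_energy:
  fixes x :: "'v \<Rightarrow> real"
  assumes G: "simple_graph V E" and C: "connected_graph V E"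
    and Z: "(\<Sum>w\<in>V. \<Sum>u\<in>neighbours V E w. (x w - x u)^2) = 0"
    and u: "u \<in> V" and v: "v \<in> V"
  shows "x u = x v"
proof -
  have fin: "finite V" using simple_graph_finite[OF G] .
  have edge: "x a = x b" if ab: "{a, b} \<in> E" for a b
  proof -
    have b: "b \<in> V" using simple_graph_edge_vertices[OF G ab] by auto
    have "\<forall>w\<in>V. (\<Sum>u\<in>neighbours V E w. (x w - x u)^2) = 0"
      using Z fin by (subst (asm) sum_nonneg_eq_0_iff) (auto intro: sum_nonneg)
    hence "\<forall>u\<in>neighbours V E b. (x b - x u)^2 = 0"
      using b finite_neighbours[OF G] by (subst (asm) sum_nonneg_eq_0_iff) auto
    moreover have "a \<in> neighbours V E b" using simple_graph_edge_vertices[OF G ab] ab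
      by (simp add: neighbours_def)
    ultimately show ?thesis by auto
  qed
  have "(\<lambda>a b. {a, b} \<in> E)\<^sup>*\<^sup>* u v" using C u v unfolding connected_graph_def by auto
  then show ?thesis
    by (induction rule: rtranclp_induct) (use edge in auto)
qed

lemma harmonic_imp_const:
  assumes G: "simple_graph V E" and C: "connected_graph V E"
    and H: "\<And>w. w \<in> V \<Longrightarrow> lap_apply V E x w = 0" and u: "u \<in> V" and v: "v \<in> V"
  shows "x u = x v"
proof -
  have "(\<Sum>w\<in>V. x w * lap_apply V E x w) = 0" using H by simp
  then show ?thesis
    using lap_quadratic_form[OF G, of x] const_if_zero_edge_energy[OF G C _ u v, of x] by simp
qed

lemma lap_apply_diff: "lap_apply V E (\<lambda>y. x y - z y) w = lap_apply V E x w - lap_apply V E z w"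
  unfolding lap_apply_def by (simp add: sum_subtractf right_diff_distrib)

lemma resistance_eqI:
  assumes G: "simple_graph V E" and C: "connected_graph V E" and u: "u \<in> V" and v: "v \<in> V"
    and X: "\<And>w. w \<in> V \<Longrightarrow> lap_apply V E x w = (if w = u then 1 else 0) - (if w = v then 1 else 0)"
  shows "resistance V E u v = x u - x v"
  unfolding resistance_def
proof (rule the_equality)
  show "\<exists>x'. (\<forall>w\<in>V. (\<Sum>y\<in>V. laplacian V E w y * x' y) =
               (if w = u then 1 else 0) - (if w = v then 1 else 0)) \<and> x u - x v = x' u - x' v"
    using X unfolding lap_apply_def by blast
next
  fix r assume "\<exists>x'. (\<forall>w\<in>V. (\<Sum>y\<in>V. laplacian V E w y * x' y) =
               (if w = u then 1 else 0) - (if w = v then 1 else 0)) \<and> r = x' u - x' v"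
  then obtain y where Y: "\<And>w. w \<in> V \<Longrightarrow> lap_apply V E y w = (if w = u then 1 else 0) - (if w = v then 1 else 0)"
    and r: "r = y u - y v" unfolding lap_apply_def by blast
  have "(\<lambda>t. x t - y t) u = (\<lambda>t. x t - y t) v"
    by (rule harmonic_imp_const[OF G C _ u v]) (simp add: lap_apply_diff X Y)
  then show "r = x u - x v" using r by simp
qed

lemma resistance_self:
  assumes G: "simple_graph V E" and C: "connected_graph V E" and u: "u \<in> V"
  shows "resistance V E u u = 0"
  using resistance_eqI[OF G C u u, of "\<lambda>_. 0"] by (simp add: lap_apply_def)

lemma laplacian_sym: "laplacian V E u v = laplacian V E v u"
  by (simp add: laplacian_def insert_commute)

lemma sum_lap_apply:
  assumes G: "simple_graph V E"
  shows "(\<Sum>w\<in>V. lap_apply V E x w) = 0"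
proof -
  have "(\<Sum>w\<in>V. lap_apply V E x w) = (\<Sum>y\<in>V. x y * lap_apply V E (\<lambda>_. 1) y)"
    unfolding lap_apply_def
    by (subst sum.swap) (simp add: sum_distrib_left laplacian_sym mult.commute)
  also have "\<dots> = 0" by (rule sum.neutral) (simp add: lap_apply_neighbours[OF G])
  finally show ?thesis .
qed

lemma sum_lap_apply_shift_zero:
  assumes G: "simple_graph V E" and C: "connected_graph V E"
    and x: "\<And>w. w \<in> V \<Longrightarrow> lap_apply V E x w + (\<Sum>u\<in>V. x u) = d w" and d: "(\<Sum>w\<in>V. d w) = 0"
  shows "(\<Sum>u\<in>V. x u) = 0"
proof -
  have "card V > 0"
    using C simple_graph_finite[OF G] unfolding connected_graph_def by (simp add: card_gt_0_iff)
  moreover have "(\<Sum>w\<in>V. lap_apply V E x w + (\<Sum>u\<in>V. x u)) = 0" using x d by simp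
  then have "real (card V) * (\<Sum>u\<in>V. x u) = 0" using sum_lap_apply[OF G, of x]
    by (simp add: sum.distrib)
  ultimately show ?thesis by simp
qed

lemma lap_apply_shift_injective:
  assumes G: "simple_graph V E" and C: "connected_graph V E"
    and x: "\<And>w. w \<in> V \<Longrightarrow> lap_apply V E x w + (\<Sum>u\<in>V. x u) = 0" and u: "u \<in> V"
  shows "x u = 0"
proof -
  have sum0: "(\<Sum>u\<in>V. x u) = 0"
    using sum_lap_apply_shift_zero[OF G C x] by simp
  have "x w = x u" if "w \<in> V" for w
    by (rule harmonic_imp_const[OF G C _ that u]) (use x sum0 in auto)
  then have "real (card V) * x u = 0" using sum0 by simp
  moreover have "card V > 0" using u simple_graph_finite[OF G] by (auto simp: card_gt_0_iff)
  ultimately show ?thesis by simp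
qed

text \<open>In the vertex order g, the matrix L + J (J the all-ones matrix) is injective, and a
  solution of (L + J) x = b with b summing to zero has sum zero, hence solves L x = b.\<close>

lemma potential_exists:
  assumes G: "simple_graph V E" and C: "connected_graph V E" and b: "(\<Sum>w\<in>V. b w) = 0"
  shows "\<exists>x. \<forall>w\<in>V. lap_apply V E x w = b w"
proof -
  define n where "n = card V"
  obtain g where g: "bij_betw g {0..<n} V"
    using ex_bij_betw_nat_finite[OF simple_graph_finite[OF G]] unfolding n_def by auto
  define h where "h = inv_into {0..<n} g"
  have gh: "g (h w) = w" and h: "h w < n" if "w \<in> V" for w
    using g that unfolding h_def by (auto simp: bij_betw_def f_inv_into_f inv_into_into)
  have hg: "h (g i) = i" if "i < n" for i
    using g that unfolding h_def by (simp add: bij_betw_def inv_into_f_f)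
  define K where "K = mat n n (\<lambda>(i, j). laplacian V E (g i) (g j) + 1)"
  have K: "K \<in> carrier_mat n n" unfolding K_def by simp
  have K_apply: "(K *\<^sub>v y) $ h w = lap_apply V E (\<lambda>u. y $ h u) w + (\<Sum>u\<in>V. y $ h u)"
    if y: "y \<in> carrier_vec n" and w: "w \<in> V" for y w
  proof -
    have "(K *\<^sub>v y) $ h w = (\<Sum>j=0..<n. (laplacian V E (g (h w)) (g j) + 1) * y $ j)"
      using h[OF w] y by (simp add: K_def scalar_prod_def)
    also have "\<dots> = (\<Sum>j=0..<n. (laplacian V E w (g j) + 1) * y $ h (g j))"
      using gh[OF w] hg by (intro sum.cong) auto
    also have "\<dots> = (\<Sum>u\<in>V. (laplacian V E w u + 1) * y $ h u)"
      by (rule sum.reindex_bij_betw[OF g])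
    finally show ?thesis by (simp add: lap_apply_def algebra_simps sum.distrib)
  qed
  have "det K \<noteq> 0"
  proof
    assume "det K = 0"
    then obtain y where y: "y \<in> carrier_vec n" "y \<noteq> 0\<^sub>v n" "K *\<^sub>v y = 0\<^sub>v n"
      using det_0_iff_vec_prod_zero[OF K] by auto
    have "y $ h w = 0" if "w \<in> V" for w
      by (rule lap_apply_shift_injective[OF G C _ that]) (use K_apply[OF y(1)] y(3) h in auto)
    moreover have "g i \<in> V" if "i < n" for i
      using g that by (auto simp: bij_betw_def)
    ultimately have "y $ i = 0" if "i < n" for i
      using hg[OF that] that by metis
    then have "y = 0\<^sub>v n"
      using y(1) by (intro eq_vecI) auto
    with y(2) show False by simp
  qed
  then obtain B where B: "B \<in> carrier_mat n n" and KB: "K * B = 1\<^sub>m n"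
    using det_non_zero_imp_unit[OF K, of "()"] unfolding Units_def ring_mat_def by auto
  define y where "y = B *\<^sub>v vec n (\<lambda>i. b (g i))"
  have y: "y \<in> carrier_vec n" unfolding y_def using B by simp
  have Ky: "K *\<^sub>v y = vec n (\<lambda>i. b (g i))"
    unfolding y_def using assoc_mult_mat_vec[OF K B] KB by simp
  have x: "lap_apply V E (\<lambda>u. y $ h u) w + (\<Sum>u\<in>V. y $ h u) = b w" if "w \<in> V" for w
    using K_apply[OF y that] Ky h[OF that] gh[OF that] by simp
  show ?thesis using x sum_lap_apply_shift_zero[OF G C x b] by auto
qed

lemma kirchhoff_double_sum:
  assumes G: "simple_graph V E" and C: "connected_graph V E"
  shows "kirchhoff V E = (\<Sum>u\<in>V. \<Sum>v\<in>V. resistance V E u v) / 2"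
proof -
  have "(\<Sum>p\<in>{(u, v). u \<in> V \<and> v \<in> V \<and> u \<noteq> v}. resistance V E (fst p) (snd p))
      = (\<Sum>p\<in>V \<times> V. resistance V E (fst p) (snd p))"
    by (rule sum.mono_neutral_left)
       (use simple_graph_finite[OF G] resistance_self[OF G C] in auto)
  then show ?thesis
    unfolding kirchhoff_def sum.cartesian_product by (simp add: case_prod_beta)
qed

lemma sum_if_eq_mult:
  "finite S \<Longrightarrow> u \<in> S \<Longrightarrow> (\<Sum>k\<in>S. (if u = k then a else 0) * f k) = a * (f u :: real)"
  by (simp add: if_distrib[of "\<lambda>t. t * _"] sum.delta cong: if_cong)

lemma sum_lifted_distances:
  fixes f :: "'i \<Rightarrow> 'i \<Rightarrow> real"
  assumes I: "finite I" and A: "finite A"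
  shows "(\<Sum>i\<in>I. \<Sum>a\<in>A. \<Sum>j\<in>I. \<Sum>b\<in>A. f i j + g a + g b - (if i = j then 1 else 0) * (h a b + h b a))
    = real (card A)^2 * (\<Sum>i\<in>I. \<Sum>j\<in>I. f i j) + 2 * real (card I)^2 * real (card A) * (\<Sum>a\<in>A. g a)
      - 2 * real (card I) * (\<Sum>a\<in>A. \<Sum>b\<in>A. h a b)"
proof -
  have h_swap: "(\<Sum>a\<in>A. \<Sum>b\<in>A. h b a) = (\<Sum>a\<in>A. \<Sum>b\<in>A. h a b)"
    by (rule sum.swap)
  have delta: "(\<Sum>j\<in>I. (if i = j then 1 else 0) * c) = (c :: real)" if "i \<in> I" for i c
    using sum_if_eq_mult[OF I that, of 1 "\<lambda>_. c"] by simp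
  have inner: "(\<Sum>a\<in>A. \<Sum>b\<in>A. f i j + g a + g b - (if i = j then 1 else 0) * (h a b + h b a))
      = real (card A)^2 * f i j + 2 * real (card A) * (\<Sum>a\<in>A. g a)
        - (if i = j then 1 else 0) * (2 * (\<Sum>a\<in>A. \<Sum>b\<in>A. h a b))" for i j
    by (simp only: sum.distrib sum_subtractf sum_distrib_left[symmetric] sum_constant h_swap)
       (simp add: power2_eq_square algebra_simps)
  have "(\<Sum>i\<in>I. \<Sum>a\<in>A. \<Sum>j\<in>I. \<Sum>b\<in>A. f i j + g a + g b - (if i = j then 1 else 0) * (h a b + h b a))
      = (\<Sum>i\<in>I. \<Sum>j\<in>I. \<Sum>a\<in>A. \<Sum>b\<in>A. f i j + g a + g b - (if i = j then 1 else 0) * (h a b + h b a))"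
    by (intro sum.cong refl sum.swap)
  also have "\<dots> = (\<Sum>i\<in>I. \<Sum>j\<in>I. real (card A)^2 * f i j + 2 * real (card A) * (\<Sum>a\<in>A. g a)
        - (if i = j then 1 else 0) * (2 * (\<Sum>a\<in>A. \<Sum>b\<in>A. h a b)))"
    by (simp only: inner)
  also have "\<dots> = real (card A)^2 * (\<Sum>i\<in>I. \<Sum>j\<in>I. f i j) + 2 * real (card I)^2 * real (card A) * (\<Sum>a\<in>A. g a)
      - 2 * real (card I) * (\<Sum>a\<in>A. \<Sum>b\<in>A. h a b)"
    using I by (simp add: sum.distrib sum_subtractf sum_distrib_left[symmetric] delta)
       (simp add: power2_eq_square)
  finally show ?thesis .
qed
section \<open>Traces of inverse matrices\<close>

lemma mat_trace_mult_comm: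
  assumes X: "X \<in> carrier_mat n m" and Y: "Y \<in> carrier_mat m n"
  shows "mat_trace (X * Y) = mat_trace (Y * X)"
proof -
  have "mat_trace (X * Y) = (\<Sum>i<n. \<Sum>k<m. X $$ (i, k) * Y $$ (k, i))"
    unfolding mat_trace_def using X Y
    by (auto simp: scalar_prod_def atLeast0LessThan intro!: sum.cong)
  also have "\<dots> = (\<Sum>k<m. \<Sum>i<n. Y $$ (k, i) * X $$ (i, k))"
    by (subst sum.swap) (simp add: mult.commute)
  also have "\<dots> = mat_trace (Y * X)"
    unfolding mat_trace_def using X Y
    by (auto simp: scalar_prod_def atLeast0LessThan intro!: sum.cong)
  finally show ?thesis .
qed

lemma upper_triangular_mult_entry:
  fixes T X :: "'a :: comm_ring_1 mat"
  assumes T: "T \<in> carrier_mat n n" and X: "X \<in> carrier_mat n m" and ut: "upper_triangular T"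
    and k: "k < n" and j: "j < m"
  shows "(T * X) $$ (k, j) = T $$ (k, k) * X $$ (k, j) + (\<Sum>l\<in>{k<..<n}. T $$ (k, l) * X $$ (l, j))"
proof -
  have "(T * X) $$ (k, j) = (\<Sum>l\<in>{0..<n}. T $$ (k, l) * X $$ (l, j))"
    using T X k j by (simp add: scalar_prod_def)
  also have "\<dots> = (\<Sum>l\<in>{0..<k}. T $$ (k, l) * X $$ (l, j)) + (\<Sum>l\<in>{k..<n}. T $$ (k, l) * X $$ (l, j))"
    using k by (simp add: sum.atLeastLessThan_concat)
  also have "(\<Sum>l\<in>{0..<k}. T $$ (k, l) * X $$ (l, j)) = 0"
    using upper_triangularD[OF ut] T k by (intro sum.neutral) auto
  also have "(\<Sum>l\<in>{k..<n}. T $$ (k, l) * X $$ (l, j))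
      = T $$ (k, k) * X $$ (k, j) + (\<Sum>l\<in>{k<..<n}. T $$ (k, l) * X $$ (l, j))"
    using k by (simp add: sum.atLeast_Suc_lessThan atLeastSucLessThan_greaterThanLessThan)
  finally show ?thesis by simp
qed

lemma upper_triangular_right_inverse:
  fixes T X :: "'a :: field mat"
  assumes T: "T \<in> carrier_mat n n" and X: "X \<in> carrier_mat n n"
    and ut: "upper_triangular T" and TX: "T * X = 1\<^sub>m n"
  shows "\<And>i j. j < i \<Longrightarrow> i < n \<Longrightarrow> X $$ (i, j) = 0"
    and "\<And>i. i < n \<Longrightarrow> X $$ (i, i) = 1 / T $$ (i, i)"
proof -
  have "det T * det X = 1" using det_mult[OF T X] TX by simp
  then have "det T \<noteq> 0" by auto
  then have "prod_list (diag_mat T) \<noteq> 0" using det_upper_triangular[OF ut T] by auto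
  then have nz: "T $$ (k, k) \<noteq> 0" if "k < n" for k
    using that T by (auto simp: diag_mat_def prod_list_zero_iff)
  show lower: "X $$ (i, j) = 0" if "j < i" "i < n" for i j
    using that
  proof (induction "n - i" arbitrary: i rule: less_induct)
    case less
    have "(\<Sum>l\<in>{i<..<n}. T $$ (i, l) * X $$ (l, j)) = 0"
      using less by (intro sum.neutral) auto
    then have "T $$ (i, i) * X $$ (i, j) = 0"
      using upper_triangular_mult_entry[OF T X ut less.prems(2), of j] less.prems TX by simp
    then show ?case using nz[OF less.prems(2)] by simp
  qed
  show "X $$ (i, i) = 1 / T $$ (i, i)" if i: "i < n" for i
  proof -
    have "(\<Sum>l\<in>{i<..<n}. T $$ (i, l) * X $$ (l, i)) = 0"
      using lower by (intro sum.neutral) auto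
    then have "T $$ (i, i) * X $$ (i, i) = 1"
      using upper_triangular_mult_entry[OF T X ut i i] TX i by simp
    then show ?thesis using nz[OF i] by (simp add: field_simps)
  qed
qed

lemma mat_trace_similar:
  assumes P: "P \<in> carrier_mat n n" and X: "X \<in> carrier_mat n n" and Q: "Q \<in> carrier_mat n n"
    and QP: "Q * P = 1\<^sub>m n"
  shows "mat_trace (P * X * Q) = mat_trace X"
proof -
  have "mat_trace (P * X * Q) = mat_trace (P * (X * Q))"
    using P X Q by (simp add: assoc_mult_mat[of _ n n _ n _ n])
  also have "\<dots> = mat_trace (X * (Q * P))"
    using mat_trace_mult_comm[of P n n "X * Q"] P X Q by (simp add: assoc_mult_mat[of _ n n _ n _ n])
  finally show ?thesis using X QP by simp
qed

text \<open>Triangularise A = P B Q by a Schur decomposition; then A + r I is similar to the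
  upper triangular B + r I, whose diagonal is (\<mu> i + r).\<close>

lemma mat_trace_shift_inverse:
  fixes A Ci :: "real mat" and \<mu> :: "nat \<Rightarrow> real"
  assumes A: "A \<in> carrier_mat n n" and Ci: "Ci \<in> carrier_mat n n"
    and cp: "char_poly A = (\<Prod>i<n. [:- \<mu> i, 1:])"
    and inv: "(A + r \<cdot>\<^sub>m 1\<^sub>m n) * Ci = 1\<^sub>m n"
  shows "mat_trace Ci = (\<Sum>i<n. 1 / (\<mu> i + r))"
proof -
  define es where "es = map \<mu> [0..<n]"
  have cp': "char_poly A = (\<Prod>e\<leftarrow>es. [:- e, 1:])"
    unfolding cp es_def
    by (simp add: prod.distinct_set_conv_list[symmetric] atLeast0LessThan o_def)
  obtain B P Q where sd: "schur_decomposition A es = (B, P, Q)"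
    by (cases "schur_decomposition A es") auto
  from schur_decomposition[OF A cp' sd]
  have sw: "similar_mat_wit A B P Q" and ut: "upper_triangular B" and dg: "diag_mat B = es"
    by auto
  from sw A have B: "B \<in> carrier_mat n n" and P: "P \<in> carrier_mat n n" and Q: "Q \<in> carrier_mat n n"
    and PQ: "P * Q = 1\<^sub>m n" and QP: "Q * P = 1\<^sub>m n" and AB: "A = P * B * Q"
    unfolding similar_mat_wit_def Let_def by auto
  define D where "D = B + r \<cdot>\<^sub>m 1\<^sub>m n"
  have D: "D \<in> carrier_mat n n" unfolding D_def using B by simp
  have utD: "upper_triangular D" using ut B unfolding D_def by (auto simp: upper_triangular_def)
  have Ddiag: "D $$ (i, i) = \<mu> i + r" if "i < n" for i
    using dg that B unfolding D_def es_def diag_mat_def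
    by (auto dest!: arg_cong[of _ _ "\<lambda>l. l ! i"])
  have QAP: "Q * (A + r \<cdot>\<^sub>m 1\<^sub>m n) * P = D"
  proof -
    have "Q * A * P = (Q * P) * B * (Q * P)"
      unfolding AB using P B Q by (simp add: assoc_mult_mat[of _ n n _ n _ n])
    moreover have "Q * (r \<cdot>\<^sub>m 1\<^sub>m n) * P = r \<cdot>\<^sub>m (Q * P)"
      using mult_smult_distrib[OF Q one_carrier_mat, of r] mult_smult_assoc_mat[OF Q P, of r] Q
      by simp
    moreover have "Q * (A + r \<cdot>\<^sub>m 1\<^sub>m n) * P = Q * A * P + Q * (r \<cdot>\<^sub>m 1\<^sub>m n) * P"
      using P Q A by (simp add: mult_add_distrib_mat[of Q n n] add_mult_distrib_mat[of _ n n])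
    ultimately show ?thesis using QP B unfolding D_def by simp
  qed
  define M where "M = A + r \<cdot>\<^sub>m 1\<^sub>m n"
  have M: "M \<in> carrier_mat n n" unfolding M_def using A by simp
  define X where "X = Q * Ci * P"
  have X: "X \<in> carrier_mat n n" unfolding X_def using Q Ci P by simp
  have "D * X = Q * (M * (P * Q) * Ci) * P"
    unfolding QAP[symmetric] X_def M_def[symmetric] using P Q Ci M by (simp add: assoc_mult_mat[of _ n n _ n _ n])
  then have DX: "D * X = 1\<^sub>m n" using PQ inv[folded M_def] QP M Q by simp
  have "P * X * Q = (P * Q) * Ci * (P * Q)"
    unfolding X_def using P Q Ci by (simp add: assoc_mult_mat[of _ n n _ n _ n])
  then have "mat_trace Ci = mat_trace (P * X * Q)" using PQ Ci by simp
  also have "\<dots> = (\<Sum>i<n. X $$ (i, i))"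
    using mat_trace_similar[OF P X Q QP] X by (simp add: mat_trace_def)
  also have "\<dots> = (\<Sum>i<n. 1 / (\<mu> i + r))"
    by (rule sum.cong) (auto simp: upper_triangular_right_inverse(2)[OF D X utD DX] Ddiag)
  finally show ?thesis .
qed
section \<open>Regular graphs and the matrix C = L + r I\<close>

locale regular_simple_graph =
  fixes n2 r2 :: nat and E2 :: "nat set set"
  assumes simple: "simple_graph {0..<n2} E2" and regular: "regular_graph {0..<n2} E2 r2"
    and degree_pos: "r2 \<ge> 1"
begin

abbreviation "V2 \<equiv> {0..<n2}"

lemma finite_E2: "finite E2"
proof -
  have "E2 \<subseteq> Pow V2" using simple unfolding simple_graph_def by auto
  then show ?thesis by (rule finite_subset) simp
qed

lemma E2_edge: assumes "e \<in> E2" shows "e \<subseteq> V2" "card e = 2" "finite e"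
  using simple_graph_edge[OF simple assms] by auto

lemma card_incident_edges: assumes v: "v \<in> V2" shows "card {e\<in>E2. v \<in> e} = r2"
proof -
  have "{e\<in>E2. v \<in> e} = (\<lambda>u. {u, v}) ` neighbours V2 E2 v"
  proof (rule equalityI; rule subsetI)
    fix e assume e: "e \<in> {e\<in>E2. v \<in> e}"
    then obtain a b where "e = {a, b}" using simple_graph_edge[OF simple] by blast
    with e obtain u where u: "e = {u, v}" by blast
    with e have "u \<in> neighbours V2 E2 v"
      using simple_graph_edge_vertices[OF simple, of u v] by (auto simp: neighbours_def)
    with u show "e \<in> (\<lambda>u. {u, v}) ` neighbours V2 E2 v" by blast
  qed (auto simp: neighbours_def)
  moreover have "inj_on (\<lambda>u. {u, v}) (neighbours V2 E2 v)"
    using simple_graph_no_loop[OF simple] by (auto simp: inj_on_def neighbours_def doubleton_eq_iff)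
  moreover have "card (neighbours V2 E2 v) = r2"
    using regular v unfolding regular_graph_def gdegree_def neighbours_def by auto
  ultimately show ?thesis by (simp add: card_image)
qed

text \<open>The Gram matrix B B^T of the vertex-edge incidence matrix B of G2, which equals r2 I + A.\<close>

definition inc_gram :: "nat \<Rightarrow> nat \<Rightarrow> real" where
  "inc_gram v w = (if v = w then real r2 else 0) + (if {v, w} \<in> E2 then 1 else 0)"

lemma card_common_edges: assumes v: "v \<in> V2" and w: "w \<in> V2"
  shows "real (card {e\<in>E2. v \<in> e \<and> w \<in> e}) = inc_gram v w"
proof (cases "v = w")
  case True
  then show ?thesis
    using card_incident_edges[OF v] simple_graph_no_loop[OF simple, of w] by (simp add: inc_gram_def)
next
  case False
  have common: "e = {v, w}" if "e \<in> E2" "v \<in> e" "w \<in> e" for e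
  proof -
    obtain a b where "e = {a, b}" using simple_graph_edge[OF simple \<open>e \<in> E2\<close>] by blast
    then show ?thesis using that(2,3) False by blast
  qed
  show ?thesis
  proof (cases "{v, w} \<in> E2")
    case True
    then have "{e\<in>E2. v \<in> e \<and> w \<in> e} = {{v, w}}" using common by blast
    then show ?thesis using True False by (simp add: inc_gram_def)
  next
    case no_edge: False
    then have "{e\<in>E2. v \<in> e \<and> w \<in> e} = {}" using common by blast
    then have "card {e\<in>E2. v \<in> e \<and> w \<in> e} = 0" by (simp only: card.empty)
    then show ?thesis using no_edge False by (simp add: inc_gram_def)
  qed
qed

lemma sum_edges_ends_swap: "(\<Sum>e\<in>E2. \<Sum>w\<in>e. h e w) = (\<Sum>w\<in>V2. \<Sum>e\<in>{e\<in>E2. w \<in> e}. h e w)"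
proof -
  have "(\<Sum>w\<in>e. h e w) = (\<Sum>w\<in>V2. if w \<in> e then h e w else 0)" if "e \<in> E2" for e
  proof -
    have "(\<Sum>w\<in>V2. if w \<in> e then h e w else 0) = (\<Sum>w\<in>{w\<in>V2. w \<in> e}. h e w)"
      by (rule sum.inter_filter[symmetric]) simp
    also have "{w\<in>V2. w \<in> e} = e" using E2_edge(1)[OF that] by auto
    finally show ?thesis by simp
  qed
  then have "(\<Sum>e\<in>E2. \<Sum>w\<in>e. h e w) = (\<Sum>w\<in>V2. \<Sum>e\<in>E2. if w \<in> e then h e w else 0)"
    by (simp add: sum.swap[of _ V2])
  also have "\<dots> = (\<Sum>w\<in>V2. \<Sum>e\<in>{e\<in>E2. w \<in> e}. h e w)"
    using finite_E2 by (simp add: sum.inter_filter)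
  finally show ?thesis .
qed
lemma sum_incident_edges:
  assumes v: "v \<in> V2"
  shows "(\<Sum>e\<in>{e\<in>E2. v \<in> e}. \<Sum>w\<in>e. g w) = (\<Sum>w\<in>V2. inc_gram v w * g w)"
proof -
  have "(\<Sum>e\<in>{e\<in>E2. v \<in> e}. \<Sum>w\<in>e. g w) = (\<Sum>e\<in>E2. \<Sum>w\<in>e. if v \<in> e then g w else 0)"
    using finite_E2 by (simp add: sum.inter_filter, intro sum.cong) auto
  also have "\<dots> = (\<Sum>w\<in>V2. \<Sum>e\<in>{e\<in>E2. w \<in> e}. if v \<in> e then g w else 0)"
    by (rule sum_edges_ends_swap)
  also have "\<dots> = (\<Sum>w\<in>V2. real (card {e\<in>E2. v \<in> e \<and> w \<in> e}) * g w)"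
  proof (intro sum.cong refl)
    fix w
    have "(\<Sum>e\<in>{e\<in>E2. w \<in> e}. if v \<in> e then g w else 0) = (\<Sum>e\<in>{e\<in>{e\<in>E2. w \<in> e}. v \<in> e}. g w)"
      by (rule sum.inter_filter[symmetric]) (use finite_E2 in simp)
    also have "{e\<in>{e\<in>E2. w \<in> e}. v \<in> e} = {e\<in>E2. v \<in> e \<and> w \<in> e}" by auto
    finally show "(\<Sum>e\<in>{e\<in>E2. w \<in> e}. if v \<in> e then g w else 0) = real (card \<dots>) * g w"
      by simp
  qed
  finally show ?thesis by (simp add: card_common_edges[OF v])
qed

lemma sum_edges_ends: "(\<Sum>e\<in>E2. \<Sum>w\<in>e. g w) = real r2 * (\<Sum>w\<in>V2. g w)"
  by (simp add: sum_edges_ends_swap card_incident_edges sum_distrib_left)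

lemma card_E2: "2 * real (card E2) = real n2 * real r2"
proof -
  have "(\<Sum>e\<in>E2. \<Sum>w\<in>e. (1::real)) = (\<Sum>e\<in>E2. 2)"
    by (rule sum.cong) (auto simp: E2_edge)
  then show ?thesis using sum_edges_ends[of "\<lambda>_. 1"] by (simp add: mult.commute)
qed

lemma inc_gram_row_sum: "u \<in> V2 \<Longrightarrow> (\<Sum>w\<in>V2. inc_gram u w) = 2 * real r2"
  using sum_incident_edges[of u "\<lambda>_. 1"] card_incident_edges[of u] by (simp add: E2_edge(2))

definition Cmat :: "real mat" where "Cmat = lap_matrix n2 E2 + real r2 \<cdot>\<^sub>m 1\<^sub>m n2"

lemma Cmat_carrier: "Cmat \<in> carrier_mat n2 n2" by (simp add: Cmat_def lap_matrix_def)

text \<open>Since L = r2 I - A for an r2-regular graph, C = 2 r2 I - A = 3 r2 I - B B^T.\<close>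

lemma Cmat_entry: assumes "u < n2" "k < n2"
  shows "Cmat $$ (u, k) = (if u = k then 3 * real r2 else 0) - inc_gram u k"
proof -
  have "\<And>u. u < n2 \<Longrightarrow> gdegree V2 E2 u = r2" using regular unfolding regular_graph_def by auto
  then show ?thesis using assms simple_graph_no_loop[OF simple, of k]
    by (simp add: Cmat_def lap_matrix_def laplacian_def inc_gram_def)
qed

lemma Cmat_row_sum: "u < n2 \<Longrightarrow> (\<Sum>l\<in>V2. Cmat $$ (u, l)) = real r2"
  by (simp add: Cmat_entry sum_subtractf inc_gram_row_sum)

lemma Cmat_sym: "u < n2 \<Longrightarrow> k < n2 \<Longrightarrow> Cmat $$ (u, k) = Cmat $$ (k, u)"
  by (simp add: Cmat_entry inc_gram_def insert_commute)

lemma Cmat_mult_vec: assumes y: "y \<in> carrier_vec n2" and u: "u < n2"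
  shows "(Cmat *\<^sub>v y) $ u = lap_apply V2 E2 (\<lambda>k. y $ k) u + real r2 * y $ u"
proof -
  have "(Cmat *\<^sub>v y) $ u = (\<Sum>k\<in>V2. (laplacian V2 E2 u k + (if u = k then real r2 else 0)) * y $ k)"
    using y u by (auto simp: Cmat_def lap_matrix_def scalar_prod_def intro!: sum.cong)
  also have "\<dots> = lap_apply V2 E2 (\<lambda>k. y $ k) u + (\<Sum>k\<in>V2. (if u = k then real r2 else 0) * y $ k)"
    by (simp add: lap_apply_def distrib_right sum.distrib)
  finally show ?thesis
    using u by (simp add: sum_if_eq_mult)
qed

text \<open>C is positive definite: x^T C x is the edge energy of x plus r2 |x|^2.\<close>

lemma det_Cmat_nonzero: "det Cmat \<noteq> 0"
proof
  assume "det Cmat = 0"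
  then obtain y where y: "y \<in> carrier_vec n2" "y \<noteq> 0\<^sub>v n2" "Cmat *\<^sub>v y = 0\<^sub>v n2"
    using det_0_iff_vec_prod_zero[OF Cmat_carrier] by auto
  define x where "x = (\<lambda>k. y $ k)"
  have "lap_apply V2 E2 x u + real r2 * x u = 0" if "u \<in> V2" for u
    using Cmat_mult_vec[OF y(1), of u] y(3) that unfolding x_def by simp
  then have "(\<Sum>u\<in>V2. x u * (lap_apply V2 E2 x u + real r2 * x u)) = 0" by simp
  then have "(\<Sum>u\<in>V2. x u * lap_apply V2 E2 x u) + real r2 * (\<Sum>u\<in>V2. (x u)^2) = 0"
    by (simp add: algebra_simps sum.distrib sum_distrib_left power2_eq_square)
  moreover have "(\<Sum>u\<in>V2. x u * lap_apply V2 E2 x u) \<ge> 0"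
    unfolding lap_quadratic_form[OF simple] by (auto intro!: sum_nonneg)
  ultimately have "real r2 * (\<Sum>u\<in>V2. (x u)^2) \<le> 0" by linarith
  moreover have "(\<Sum>u\<in>V2. (x u)^2) \<ge> 0" by (auto intro: sum_nonneg)
  ultimately have "(\<Sum>u\<in>V2. (x u)^2) = 0" using degree_pos by (auto simp: mult_le_0_iff)
  then have "\<forall>u\<in>V2. x u = 0" by (subst (asm) sum_nonneg_eq_0_iff) auto
  then have "y = 0\<^sub>v n2" using y(1) by (intro eq_vecI) (auto simp: x_def)
  with y(2) show False by simp
qed

definition Cinv :: "real mat" where "Cinv = the (mat_inverse Cmat)"

lemma Cmat_Cinv: "Cmat * Cinv = 1\<^sub>m n2" "Cinv * Cmat = 1\<^sub>m n2" "Cinv \<in> carrier_mat n2 n2"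
proof -
  obtain B where B: "mat_inverse Cmat = Some B"
    using mat_inverse(1)[OF Cmat_carrier, where b="()"]
      det_non_zero_imp_unit[OF Cmat_carrier det_Cmat_nonzero, where b="()"] by fastforce
  then show "Cmat * Cinv = 1\<^sub>m n2" "Cinv * Cmat = 1\<^sub>m n2" "Cinv \<in> carrier_mat n2 n2"
    using mat_inverse(2)[OF Cmat_carrier B] by (auto simp: Cinv_def)
qed

abbreviation c :: "nat \<Rightarrow> nat \<Rightarrow> real" where "c u v \<equiv> Cinv $$ (u, v)"

lemma sum_inc_gram_Cinv: assumes u: "u < n2" and v: "v < n2"
  shows "(\<Sum>w\<in>V2. inc_gram u w * c w v) = 3 * real r2 * c u v - (if u = v then 1 else 0)"
proof -
  have "(if u = v then 1 else 0) = (Cmat * Cinv) $$ (u, v)" using Cmat_Cinv(1) u v by simp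
  also have "\<dots> = (\<Sum>w\<in>V2. (if u = w then 3 * real r2 else 0) * c w v - inc_gram u w * c w v)"
    using u v Cmat_Cinv(3) Cmat_carrier
    by (auto simp: scalar_prod_def Cmat_entry algebra_simps intro!: sum.cong)
  also have "\<dots> = 3 * real r2 * c u v - (\<Sum>w\<in>V2. inc_gram u w * c w v)"
    using u by (simp add: sum_subtractf sum_if_eq_mult)
  finally show ?thesis by simp
qed

lemma Cinv_row_sum: assumes u: "u < n2" shows "(\<Sum>w\<in>V2. c u w) = 1 / real r2"
proof -
  have "1 = (\<Sum>l\<in>V2. (Cinv * Cmat) $$ (u, l))" using Cmat_Cinv(2) u by (simp add: sum.delta)
  also have "\<dots> = (\<Sum>l\<in>V2. \<Sum>w\<in>V2. c u w * Cmat $$ (w, l))"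
    using u Cmat_Cinv(3) Cmat_carrier by (intro sum.cong) (auto simp: scalar_prod_def)
  also have "\<dots> = (\<Sum>w\<in>V2. c u w) * real r2"
    by (subst sum.swap) (simp add: sum_distrib_left[symmetric] Cmat_row_sum sum_distrib_right)
  finally show ?thesis using degree_pos by (simp add: field_simps)
qed

lemma Cinv_col_sum: assumes v: "v < n2" shows "(\<Sum>w\<in>V2. c w v) = 1 / real r2"
proof -
  have "1 = (\<Sum>l\<in>V2. (Cmat * Cinv) $$ (l, v))" using Cmat_Cinv(1) v by (simp add: sum.delta')
  also have "\<dots> = (\<Sum>l\<in>V2. \<Sum>w\<in>V2. Cmat $$ (w, l) * c w v)"
    using v Cmat_Cinv(3) Cmat_carrier by (intro sum.cong) (auto simp: scalar_prod_def Cmat_sym)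
  also have "\<dots> = real r2 * (\<Sum>w\<in>V2. c w v)"
    by (subst sum.swap) (simp add: sum_distrib_right[symmetric] Cmat_row_sum sum_distrib_left)
  finally show ?thesis using degree_pos by (simp add: field_simps)
qed

lemma mat_trace_Cinv:
  assumes eig: "char_poly (lap_matrix n2 E2) = (\<Prod>i<n2. [:- \<mu> i, 1:])"
  shows "mat_trace Cinv = (\<Sum>i<n2. 1 / (\<mu> i + real r2))"
  by (rule mat_trace_shift_inverse[OF _ Cmat_Cinv(3) eig Cmat_Cinv(1)[unfolded Cmat_def]])
     (simp add: lap_matrix_def)

lemma mat_trace_Cinv_diag: "mat_trace Cinv = (\<Sum>v\<in>V2. c v v)"
  unfolding mat_trace_def using Cmat_Cinv(3) by (simp add: atLeast0LessThan)

lemma mat_trace_Cinv_adj: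
  "mat_trace (Cinv * adj_matrix n2 E2) = (\<Sum>u\<in>V2. \<Sum>k\<in>V2. (if {u, k} \<in> E2 then 1 else 0) * c u k)"
  unfolding mat_trace_def using Cmat_Cinv(3)
  by (auto simp: atLeast0LessThan scalar_prod_def adj_matrix_def insert_commute intro!: sum.cong)

section \<open>The Green function of a pendant copy of S(G2)\<close>

text \<open>The pendant graph attached to a vertex of G1 has the root None joined to every
  subdivision vertex of S(G2). Its Laplacian grounded at the root is [[r2 I, -B], [-B^T, 3 I]],
  whose Schur complement is C/3; inverting blockwise gives the Green function below:
  green a b is the potential at a when unit current enters at b and leaves at the root.\<close>

fun green :: "(nat + nat set) option \<Rightarrow> (nat + nat set) option \<Rightarrow> real" where
  "green (Some (Inl u)) (Some (Inl v)) = 3 * c u v"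
| "green (Some (Inl u)) (Some (Inr f)) = (\<Sum>w\<in>f. c u w)"
| "green (Some (Inr e)) (Some (Inl v)) = (\<Sum>w\<in>e. c w v)"
| "green (Some (Inr e)) (Some (Inr f)) = (if e = f then 1/3 else 0) + (\<Sum>w\<in>e. \<Sum>w'\<in>f. c w w') / 3"
| "green _ _ = 0"

definition subdiv_nodes :: "(nat + nat set) set" where
  "subdiv_nodes = Inl ` V2 \<union> Inr ` E2"

definition pendant_nodes :: "(nat + nat set) option set" where
  "pendant_nodes = insert None (Some ` subdiv_nodes)"

lemma finite_subdiv_nodes: "finite subdiv_nodes"
  unfolding subdiv_nodes_def using finite_E2 by auto

lemma finite_pendant_nodes: "finite pendant_nodes"
  unfolding pendant_nodes_def using finite_subdiv_nodes by auto

lemma pendant_nodes_cases [consumes 1, case_names root vertex edge]: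
  assumes "x \<in> pendant_nodes"
  obtains (root) "x = None" | (vertex) v where "x = Some (Inl v)" "v \<in> V2"
    | (edge) f where "x = Some (Inr f)" "f \<in> E2"
  using assms unfolding pendant_nodes_def subdiv_nodes_def by auto

lemma card_pendant_nodes: "card pendant_nodes = 1 + n2 + card E2"
proof -
  have "card subdiv_nodes = n2 + card E2"
    unfolding subdiv_nodes_def using finite_E2
    by (subst card_Un_disjoint) (auto simp: card_image inj_on_def)
  moreover have "card (Some ` subdiv_nodes) = card subdiv_nodes" by (simp add: card_image)
  ultimately show ?thesis unfolding pendant_nodes_def using finite_subdiv_nodes by simp
qed

lemma sum_subdiv_nodes: "(\<Sum>z\<in>subdiv_nodes. F z) = (\<Sum>v\<in>V2. F (Inl v)) + (\<Sum>e\<in>E2. F (Inr e))"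
  unfolding subdiv_nodes_def using finite_E2
  by (subst sum.union_disjoint) (auto simp: sum.reindex)

lemma sum_pendant_nodes: "(\<Sum>a\<in>pendant_nodes. F a) = F None + (\<Sum>z\<in>subdiv_nodes. F (Some z))"
  unfolding pendant_nodes_def using finite_subdiv_nodes by (simp add: sum.reindex)

lemma green_lap_vertex:
  assumes v: "v \<in> V2" and x: "x \<in> pendant_nodes"
  shows "(\<Sum>e\<in>{e\<in>E2. v \<in> e}. green (Some (Inl v)) x - green (Some (Inr e)) x)
    = (if x = Some (Inl v) then 1 else 0)"
  using x
proof (cases rule: pendant_nodes_cases)
  case root then show ?thesis by simp
next
  case (vertex v')
  have "(\<Sum>e\<in>{e\<in>E2. v \<in> e}. green (Some (Inl v)) x - green (Some (Inr e)) x)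
      = real r2 * (3 * c v v') - (\<Sum>w\<in>V2. inc_gram v w * c w v')"
    using vertex card_incident_edges[OF v] sum_incident_edges[OF v, of "\<lambda>w. c w v'"]
    by (simp add: sum_subtractf)
  also have "\<dots> = (if v = v' then 1 else 0)" using sum_inc_gram_Cinv[of v v'] v vertex by simp
  finally show ?thesis using vertex by simp
next
  case (edge f)
  have "(\<Sum>w\<in>V2. inc_gram v w * (\<Sum>w'\<in>f. c w w')) = (\<Sum>w'\<in>f. \<Sum>w\<in>V2. inc_gram v w * c w w')"
    unfolding sum_distrib_left by (rule sum.swap)
  also have "\<dots> = (\<Sum>w'\<in>f. 3 * real r2 * c v w' - (if v = w' then 1 else 0))"
    using v E2_edge(1)[OF edge(2)] by (intro sum.cong refl) (auto simp: sum_inc_gram_Cinv)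
  also have "\<dots> = 3 * real r2 * (\<Sum>w'\<in>f. c v w') - (if v \<in> f then 1 else 0)"
    using E2_edge[OF edge(2)] by (simp add: sum_subtractf sum_distrib_left)
  finally have gram: "(\<Sum>w\<in>V2. inc_gram v w * (\<Sum>w'\<in>f. c w w')) = \<dots>" .
  have "(\<Sum>e\<in>{e\<in>E2. v \<in> e}. (if e = f then 1/3 else 0)) = (if v \<in> f then 1/3 else (0::real))"
    using finite_E2 edge(2) by (simp add: sum.delta')
  then show ?thesis
    using edge card_incident_edges[OF v] sum_incident_edges[OF v, of "\<lambda>w. \<Sum>w'\<in>f. c w w'"] gram
    by (simp add: sum_subtractf sum.distrib sum_divide_distrib[symmetric] diff_divide_distrib)
qed

lemma green_lap_edge:
  assumes e: "e \<in> E2" and x: "x \<in> pendant_nodes"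
  shows "(\<Sum>w\<in>e. green (Some (Inr e)) x - green (Some (Inl w)) x) + green (Some (Inr e)) x
    = (if x = Some (Inr e) then 1 else 0)"
  using x
proof (cases rule: pendant_nodes_cases)
  case root then show ?thesis by simp
next
  case (vertex v')
  then show ?thesis
    using E2_edge[OF e] by (simp add: sum_subtractf sum_distrib_left[symmetric])
next
  case (edge f)
  then show ?thesis
    using E2_edge[OF e] by (simp add: sum_subtractf sum.distrib)
qed

lemma green_root_flux:
  assumes x: "x \<in> pendant_nodes"
  shows "(\<Sum>e\<in>E2. green (Some (Inr e)) x) = (if x = None then 0 else 1)"
  using x
proof (cases rule: pendant_nodes_cases)
  case root then show ?thesis by simp
next
  case (vertex v')
  then show ?thesis
    using sum_edges_ends[of "\<lambda>w. c w v'"] Cinv_col_sum[of v'] degree_pos by simp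
next
  case (edge f)
  have "(\<Sum>e\<in>E2. \<Sum>w\<in>e. \<Sum>w'\<in>f. c w w') = real r2 * (\<Sum>w'\<in>f. \<Sum>w\<in>V2. c w w')"
    by (simp add: sum_edges_ends sum.swap[of _ V2])
  also have "\<dots> = real r2 * (2 / real r2)"
    using E2_edge[OF edge(2)] Cinv_col_sum by (simp add: subset_eq)
  finally show ?thesis
    using edge finite_E2 degree_pos by (simp add: sum.distrib sum_divide_distrib[symmetric] sum.delta')
qed
lemma sum_green_diag:
  "(\<Sum>a\<in>pendant_nodes. green a a) = 3 * mat_trace Cinv + real (card E2) / 3
    + (real r2 * mat_trace Cinv + mat_trace (Cinv * adj_matrix n2 E2)) / 3"
proof -
  have "(\<Sum>e\<in>E2. \<Sum>w\<in>e. \<Sum>w'\<in>e. c w w') = (\<Sum>w\<in>V2. \<Sum>w'\<in>V2. inc_gram w w' * c w w')"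
    by (simp add: sum_edges_ends_swap sum_incident_edges)
  also have "\<dots> = (\<Sum>w\<in>V2. real r2 * c w w + (\<Sum>w'\<in>V2. (if {w, w'} \<in> E2 then 1 else 0) * c w w'))"
    by (intro sum.cong refl) (simp add: inc_gram_def distrib_right sum.distrib sum_if_eq_mult)
  also have "\<dots> = real r2 * mat_trace Cinv + mat_trace (Cinv * adj_matrix n2 E2)"
    by (simp add: mat_trace_Cinv_adj mat_trace_Cinv_diag sum.distrib sum_distrib_left)
  finally have edges: "(\<Sum>e\<in>E2. \<Sum>w\<in>e. \<Sum>w'\<in>e. c w w') = \<dots>" .
  show ?thesis
    by (simp add: sum_pendant_nodes sum_subdiv_nodes sum.distrib sum_divide_distrib[symmetric]
        edges mat_trace_Cinv_diag sum_distrib_left)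
qed

lemma sum_green:
  "(\<Sum>a\<in>pendant_nodes. \<Sum>b\<in>pendant_nodes. green a b)
    = 3 * real n2 / real r2 + 2 * real n2 + real (card E2) / 3 + real r2 * real n2 / 3"
proof -
  have r: "real r2 > 0" using degree_pos by simp
  have row: "(\<Sum>w\<in>V2. c u w) = 1 / real r2" and col: "(\<Sum>w\<in>V2. c w u) = 1 / real r2"
    if "u \<in> V2" for u
    using Cinv_row_sum Cinv_col_sum that by auto
  have vertex_vertex: "(\<Sum>v\<in>V2. \<Sum>v'\<in>V2. 3 * c v v') = 3 * real n2 / real r2"
    by (simp add: sum_distrib_left[symmetric] row)
  have vertex_edge: "(\<Sum>v\<in>V2. \<Sum>f\<in>E2. \<Sum>w\<in>f. c v w) = real n2"
    using r by (simp add: sum_edges_ends row)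
  have edge_vertex: "(\<Sum>e\<in>E2. \<Sum>v\<in>V2. \<Sum>w\<in>e. c w v) = real n2"
  proof -
    have "(\<Sum>e\<in>E2. \<Sum>v\<in>V2. \<Sum>w\<in>e. c w v) = (\<Sum>e\<in>E2. \<Sum>w\<in>e. \<Sum>v\<in>V2. c w v)"
      by (intro sum.cong refl sum.swap)
    then show ?thesis using r by (simp add: sum_edges_ends row)
  qed
  have edge_edge: "(\<Sum>e\<in>E2. \<Sum>f\<in>E2. \<Sum>w\<in>e. \<Sum>w'\<in>f. c w w') = real r2 * real n2"
  proof -
    have "(\<Sum>e\<in>E2. \<Sum>f\<in>E2. \<Sum>w\<in>e. \<Sum>w'\<in>f. c w w') = (\<Sum>e\<in>E2. \<Sum>w\<in>e. \<Sum>f\<in>E2. \<Sum>w'\<in>f. c w w')"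
      by (intro sum.cong refl sum.swap)
    then show ?thesis using r by (simp add: sum_edges_ends row)
  qed
  have "(\<Sum>e\<in>E2. \<Sum>f\<in>E2. green (Some (Inr e)) (Some (Inr f)))
      = real (card E2) / 3 + (\<Sum>e\<in>E2. \<Sum>f\<in>E2. \<Sum>w\<in>e. \<Sum>w'\<in>f. c w w') / 3"
    using finite_E2 by (simp add: sum.distrib sum_divide_distrib[symmetric])
  then show ?thesis
    using vertex_vertex vertex_edge edge_vertex edge_edge
    by (simp add: sum_pendant_nodes sum_subdiv_nodes sum.distrib)
qed

end

section \<open>The corona-edge graph\<close>

locale corona = regular_simple_graph n2 r2 E2 for n2 r2 :: nat and E2 :: "nat set set" +
  fixes V1 :: "'a set" and E1 :: "'a set set"
  assumes simple1: "simple_graph V1 E1" and connected1: "connected_graph V1 E1"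
begin

abbreviation "VH \<equiv> corona_edge_V V1 V2 E2"
abbreviation "EH \<equiv> corona_edge_E V1 E1 V2 E2"

fun node :: "'a \<Rightarrow> (nat + nat set) option \<Rightarrow> 'a + ('a \<times> (nat + nat set))" where
  "node i None = Inl i"
| "node i (Some z) = Inr (i, z)"

lemma VH_Inl[simp]: "Inl a \<in> VH \<longleftrightarrow> a \<in> V1"
  by (auto simp: corona_edge_V_def)

lemma VH_Inr_Inl[simp]: "Inr (i, Inl v) \<in> VH \<longleftrightarrow> i \<in> V1 \<and> v \<in> V2"
  by (auto simp: corona_edge_V_def)

lemma VH_Inr_Inr[simp]: "Inr (i, Inr e) \<in> VH \<longleftrightarrow> i \<in> V1 \<and> e \<in> E2"
  by (auto simp: corona_edge_V_def)

lemma VH_cases: obtains (root) a where "u = Inl a" | (vertex) i v where "u = Inr (i, Inl v)"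
    | (edge) i e where "u = Inr (i, Inr e)"
  by (metis sumE surj_pair)

lemma VH_eq_node_image: "VH = (\<lambda>(i, a). node i a) ` (V1 \<times> pendant_nodes)"
proof (rule Set.set_eqI)
  fix x
  show "x \<in> VH \<longleftrightarrow> x \<in> (\<lambda>(i, a). node i a) ` (V1 \<times> pendant_nodes)"
  proof (cases x rule: VH_cases)
    case (root a)
    then show ?thesis by (auto simp: pendant_nodes_def intro!: image_eqI[of _ _ "(a, None)"])
  next
    case (vertex i v)
    then show ?thesis
      by (auto simp: pendant_nodes_def subdiv_nodes_def elim!: node.elims
          intro!: image_eqI[of _ _ "(i, Some (Inl v))"])
  next
    case (edge i e)
    then show ?thesis
      by (auto simp: pendant_nodes_def subdiv_nodes_def elim!: node.elims
          intro!: image_eqI[of _ _ "(i, Some (Inr e))"])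
  qed
qed

lemma inj_on_node: "inj_on (\<lambda>(i, a). node i a) (V1 \<times> pendant_nodes)"
proof (rule inj_onI, clarify)
  fix i a j b assume "node i a = node j b"
  then show "i = j \<and> a = b" by (cases a; cases b) auto
qed

lemma finite_VH: "finite VH"
  unfolding VH_eq_node_image using simple_graph_finite[OF simple1] finite_pendant_nodes by auto

lemma sum_VH: "(\<Sum>u\<in>VH. h u) = (\<Sum>i\<in>V1. \<Sum>a\<in>pendant_nodes. h (node i a))"
  unfolding VH_eq_node_image sum.reindex[OF inj_on_node]
  by (simp add: sum.cartesian_product split_def)

lemma EH_Inl_Inl[simp]: "{Inl a, Inl b} \<in> EH \<longleftrightarrow> {a, b} \<in> E1"
  by (auto simp: corona_edge_E_def doubleton_eq_iff insert_commute)

lemma EH_Inl_Inr[simp]: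
  "{Inl a, Inr (i, z)} \<in> EH \<longleftrightarrow> i = a \<and> a \<in> V1 \<and> (\<exists>e. z = Inr e \<and> e \<in> E2)"
  by (auto simp: corona_edge_E_def doubleton_eq_iff)

lemma EH_Inr_Inl[simp]:
  "{Inr (i, z), Inl a} \<in> EH \<longleftrightarrow> i = a \<and> a \<in> V1 \<and> (\<exists>e. z = Inr e \<and> e \<in> E2)"
  using EH_Inl_Inr by (simp add: insert_commute)

lemma EH_Inr_Inr[simp]: "{Inr (i, z), Inr (j, z')} \<in> EH \<longleftrightarrow> i = j \<and> i \<in> V1 \<and>
    ((\<exists>v e. z = Inl v \<and> z' = Inr e \<and> e \<in> E2 \<and> v \<in> e) \<or> (\<exists>v e. z = Inr e \<and> z' = Inl v \<and> e \<in> E2 \<and> v \<in> e))"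
  by (auto simp: corona_edge_E_def doubleton_eq_iff)

lemma simple_H: "simple_graph VH EH"
  unfolding simple_graph_def
proof (intro conjI finite_VH subsetI)
  fix x assume "x \<in> EH"
  then consider (base) a b where "x = {Inl a, Inl b}" "{a, b} \<in> E1"
    | (copy) i v e where "x = {Inr (i, Inl v), Inr (i, Inr e)}" "i \<in> V1" "e \<in> E2" "v \<in> e"
    | (join) i e where "x = {Inl i, Inr (i, Inr e)}" "i \<in> V1" "e \<in> E2"
    unfolding corona_edge_E_def by blast
  then show "x \<in> {{u, v} |u v. u \<in> VH \<and> v \<in> VH \<and> u \<noteq> v}"
  proof cases
    case base
    then have "a \<in> V1" "b \<in> V1" "a \<noteq> b"
      using simple_graph_edge_vertices[OF simple1] simple_graph_no_loop[OF simple1, of a] by auto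
    then show ?thesis unfolding base(1)
      by (intro CollectI exI[of _ "Inl a"] exI[of _ "Inl b"]) simp
  next
    case copy
    then have "v \<in> V2" using E2_edge(1)[of e] by auto
    then show ?thesis unfolding copy(1) using copy
      by (intro CollectI exI[of _ "Inr (i, Inl v)"] exI[of _ "Inr (i, Inr e)"]) simp
  next
    case join
    then show ?thesis
      by (intro CollectI exI[of _ "Inl i"] exI[of _ "Inr (i, Inr e)"]) simp
  qed
qed

lemma neighbours_H_Inl: assumes k: "k \<in> V1"
  shows "neighbours VH EH (Inl k) = Inl ` neighbours V1 E1 k \<union> (\<lambda>e. Inr (k, Inr e)) ` E2"
proof (rule Set.set_eqI)
  fix u show "u \<in> neighbours VH EH (Inl k) \<longleftrightarrow> u \<in> Inl ` neighbours V1 E1 k \<union> (\<lambda>e. Inr (k, Inr e)) ` E2"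
    by (cases u rule: VH_cases) (use k in \<open>auto simp: neighbours_def\<close>)
qed

lemma neighbours_H_vertex: assumes k: "k \<in> V1" and v: "v \<in> V2"
  shows "neighbours VH EH (Inr (k, Inl v)) = (\<lambda>e. Inr (k, Inr e)) ` {e\<in>E2. v \<in> e}"
proof (rule Set.set_eqI)
  fix u show "u \<in> neighbours VH EH (Inr (k, Inl v)) \<longleftrightarrow> u \<in> (\<lambda>e. Inr (k, Inr e)) ` {e\<in>E2. v \<in> e}"
    by (cases u rule: VH_cases) (use k v in \<open>auto simp: neighbours_def\<close>)
qed

lemma neighbours_H_edge: assumes k: "k \<in> V1" and e: "e \<in> E2"
  shows "neighbours VH EH (Inr (k, Inr e)) = insert (Inl k) ((\<lambda>w. Inr (k, Inl w)) ` e)"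
proof (rule Set.set_eqI)
  fix u show "u \<in> neighbours VH EH (Inr (k, Inr e)) \<longleftrightarrow> u \<in> insert (Inl k) ((\<lambda>w. Inr (k, Inl w)) ` e)"
    by (cases u rule: VH_cases) (use k e E2_edge(1)[OF e] in \<open>auto simp: neighbours_def\<close>)
qed

lemma lap_apply_H_Inl: assumes k: "k \<in> V1"
  shows "lap_apply VH EH P (Inl k)
    = lap_apply V1 E1 (\<lambda>a. P (Inl a)) k + (\<Sum>e\<in>E2. P (Inl k) - P (Inr (k, Inr e)))"
proof -
  have "lap_apply VH EH P (Inl k)
      = (\<Sum>u\<in>Inl ` neighbours V1 E1 k. P (Inl k) - P u) + (\<Sum>u\<in>(\<lambda>e. Inr (k, Inr e)) ` E2. P (Inl k) - P u)"
    using k finite_neighbours[OF simple1] finite_E2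
    by (simp add: lap_apply_neighbours[OF simple_H] neighbours_H_Inl, subst sum.union_disjoint) auto
  then show ?thesis
    using k by (simp add: lap_apply_neighbours[OF simple1] sum.reindex inj_on_def)
qed

lemma lap_apply_H_vertex: assumes k: "k \<in> V1" and v: "v \<in> V2"
  shows "lap_apply VH EH P (Inr (k, Inl v)) = (\<Sum>e\<in>{e\<in>E2. v \<in> e}. P (Inr (k, Inl v)) - P (Inr (k, Inr e)))"
  using k v by (simp add: lap_apply_neighbours[OF simple_H] neighbours_H_vertex sum.reindex inj_on_def)

lemma lap_apply_H_edge: assumes k: "k \<in> V1" and e: "e \<in> E2"
  shows "lap_apply VH EH P (Inr (k, Inr e))
    = (\<Sum>w\<in>e. P (Inr (k, Inr e)) - P (Inr (k, Inl w))) + (P (Inr (k, Inr e)) - P (Inl k))"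
  using k e E2_edge(3)[OF e]
  by (simp add: lap_apply_neighbours[OF simple_H] neighbours_H_edge, subst sum.insert)
     (auto simp: sum.reindex inj_on_def)

lemma connected_H: "connected_graph VH EH"
  unfolding connected_graph_def
proof (intro conjI ballI)
  show "VH \<noteq> {}" using connected1 unfolding connected_graph_def by (auto intro: VH_Inl[THEN iffD2])
next
  let ?R = "\<lambda>x y. {x, y} \<in> EH"
  have sym: "symp ?R\<^sup>*\<^sup>*" by (rule symp_rtranclp) (auto simp: symp_def insert_commute)
  have roots: "?R\<^sup>*\<^sup>* (Inl a) (Inl b)" if "a \<in> V1" "b \<in> V1" for a b
  proof -
    have "(\<lambda>x y. {x, y} \<in> E1)\<^sup>*\<^sup>* a b" using connected1 that unfolding connected_graph_def by auto
    then show ?thesis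
      by (induction rule: rtranclp_induct) (auto intro: rtranclp.rtrancl_into_rtrancl)
  qed
  have to_root: "\<exists>i\<in>V1. ?R\<^sup>*\<^sup>* (Inl i) u" if u: "u \<in> VH" for u
  proof (cases u rule: VH_cases)
    case (root a)
    then show ?thesis using u by auto
  next
    case (vertex i v)
    then have "i \<in> V1" "v \<in> V2" using u by auto
    moreover obtain e where "e \<in> E2" "v \<in> e"
      using card_incident_edges[OF \<open>v \<in> V2\<close>] degree_pos by (metis (no_types, lifting) Collect_empty_eq card.empty not_one_le_zero)
    ultimately have "?R (Inl i) (Inr (i, Inr e))" "?R (Inr (i, Inr e)) u"
      using vertex by auto
    then show ?thesis using \<open>i \<in> V1\<close> by (meson converse_rtranclp_into_rtranclp r_into_rtranclp)
  next
    case (edge i e)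
    then show ?thesis using u by (auto intro!: bexI[of _ i])
  qed
  fix u w assume "u \<in> VH" "w \<in> VH"
  then obtain i j where "i \<in> V1" "?R\<^sup>*\<^sup>* (Inl i) u" "j \<in> V1" "?R\<^sup>*\<^sup>* (Inl j) w"
    using to_root by blast
  then show "?R\<^sup>*\<^sup>* u w" using roots[of i j] sym by (meson rtranclp_trans sympD)
qed

text \<open>The potential of a unit current from node i a to node j b: the potential \<phi> of G1
  between i and j, corrected inside the pendant copies at i and at j by the Green function.\<close>

definition green_potential ::
    "('a \<Rightarrow> real) \<Rightarrow> 'a \<Rightarrow> (nat + nat set) option \<Rightarrow> 'a \<Rightarrow> (nat + nat set) option
      \<Rightarrow> 'a + 'a \<times> (nat + nat set) \<Rightarrow> real" where
  "green_potential \<phi> i a j b x = (case x of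
      Inl k \<Rightarrow> \<phi> k
    | Inr (k, z) \<Rightarrow> \<phi> k + (if k = i then 1 else 0) * green (Some z) a - (if k = j then 1 else 0) * green (Some z) b)"

lemma lap_apply_green_potential:
  assumes \<phi>: "\<And>w. w \<in> V1 \<Longrightarrow> lap_apply V1 E1 \<phi> w = (if w = i then 1 else 0) - (if w = j then 1 else 0)"
    and a: "a \<in> pendant_nodes" and b: "b \<in> pendant_nodes" and w: "w \<in> VH"
  shows "lap_apply VH EH (green_potential \<phi> i a j b) w
    = (if w = node i a then 1 else 0) - (if w = node j b then 1 else 0)"
proof -
  let ?P = "green_potential \<phi> i a j b"
  have node_Inl: "Inl k = node i' c \<longleftrightarrow> k = i' \<and> c = None" for k i' c by (cases c) auto
  have node_Inr: "Inr (k, z) = node i' c \<longleftrightarrow> k = i' \<and> c = Some z" for k z i' c by (cases c) auto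
  show ?thesis
  proof (cases w rule: VH_cases)
    case (root k)
    then have k: "k \<in> V1" using w by simp
    have "lap_apply VH EH ?P w = lap_apply V1 E1 \<phi> k
        - ((if k = i then 1 else 0) * (\<Sum>e\<in>E2. green (Some (Inr e)) a)
          - (if k = j then 1 else 0) * (\<Sum>e\<in>E2. green (Some (Inr e)) b))"
      using lap_apply_H_Inl[OF k, of ?P] root
      by (simp add: green_potential_def sum_subtractf sum_distrib_left)
    then show ?thesis
      using root k \<phi> green_root_flux[OF a] green_root_flux[OF b] by (auto simp: node_Inl)
  next
    case (vertex k v)
    then have kv: "k \<in> V1" "v \<in> V2" using w by auto
    have "lap_apply VH EH ?P w
        = (if k = i then 1 else 0) * (\<Sum>e\<in>{e\<in>E2. v \<in> e}. green (Some (Inl v)) a - green (Some (Inr e)) a)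
          - (if k = j then 1 else 0) * (\<Sum>e\<in>{e\<in>E2. v \<in> e}. green (Some (Inl v)) b - green (Some (Inr e)) b)"
      using lap_apply_H_vertex[OF kv, of ?P] vertex
      by (simp add: green_potential_def sum_subtractf sum_distrib_left algebra_simps)
    then show ?thesis
      using vertex green_lap_vertex[OF kv(2) a] green_lap_vertex[OF kv(2) b] by (auto simp: node_Inr)
  next
    case (edge k e)
    then have ke: "k \<in> V1" "e \<in> E2" using w by auto
    have "lap_apply VH EH ?P w
        = (if k = i then 1 else 0) * ((\<Sum>x\<in>e. green (Some (Inr e)) a - green (Some (Inl x)) a) + green (Some (Inr e)) a)
          - (if k = j then 1 else 0) * ((\<Sum>x\<in>e. green (Some (Inr e)) b - green (Some (Inl x)) b) + green (Some (Inr e)) b)"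
      using lap_apply_H_edge[OF ke, of ?P] edge
      by (simp add: green_potential_def sum_subtractf sum_distrib_left algebra_simps)
    then show ?thesis
      using edge green_lap_edge[OF ke(2) a] green_lap_edge[OF ke(2) b] by (auto simp: node_Inr)
  qed
qed

lemma resistance_H_node:
  assumes i: "i \<in> V1" and j: "j \<in> V1" and a: "a \<in> pendant_nodes" and b: "b \<in> pendant_nodes"
  shows "resistance VH EH (node i a) (node j b) = resistance V1 E1 i j + green a a + green b b
           - (if i = j then 1 else 0) * (green a b + green b a)"
proof -
  have "(\<Sum>w\<in>V1. (if w = i then 1 else 0) - (if w = j then 1 else 0) :: real) = 0"
    using i j simple_graph_finite[OF simple1] by (simp add: sum_subtractf)
  then obtain \<phi> where \<phi>: "\<forall>w\<in>V1. lap_apply V1 E1 \<phi> w = (if w = i then 1 else 0) - (if w = j then 1 else 0)"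
    using potential_exists[OF simple1 connected1] by blast
  have nodes: "node i a \<in> VH" "node j b \<in> VH" using i j a b unfolding VH_eq_node_image by auto
  have "resistance VH EH (node i a) (node j b)
      = green_potential \<phi> i a j b (node i a) - green_potential \<phi> i a j b (node j b)"
    using lap_apply_green_potential[OF _ a b] \<phi> by (intro resistance_eqI[OF simple_H connected_H nodes]) auto
  moreover have "resistance V1 E1 i j = \<phi> i - \<phi> j"
    using \<phi> by (intro resistance_eqI[OF simple1 connected1 i j]) auto
  ultimately show ?thesis by (cases a; cases b) (auto simp: green_potential_def)
qed

lemma kirchhoff_H:
  "kirchhoff VH EH = real (card pendant_nodes)^2 * kirchhoff V1 E1
      + real (card V1)^2 * real (card pendant_nodes) * (\<Sum>a\<in>pendant_nodes. green a a)
      - real (card V1) * (\<Sum>a\<in>pendant_nodes. \<Sum>b\<in>pendant_nodes. green a b)"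
proof -
  have "2 * kirchhoff VH EH
      = (\<Sum>i\<in>V1. \<Sum>a\<in>pendant_nodes. \<Sum>j\<in>V1. \<Sum>b\<in>pendant_nodes. resistance VH EH (node i a) (node j b))"
    by (simp add: kirchhoff_double_sum[OF simple_H connected_H] sum_VH)
  also have "\<dots> = (\<Sum>i\<in>V1. \<Sum>a\<in>pendant_nodes. \<Sum>j\<in>V1. \<Sum>b\<in>pendant_nodes. resistance V1 E1 i j
      + green a a + green b b - (if i = j then 1 else 0) * (green a b + green b a))"
    by (intro sum.cong refl) (simp add: resistance_H_node)
  also have "\<dots> = real (card pendant_nodes)^2 * (2 * kirchhoff V1 E1)
      + 2 * real (card V1)^2 * real (card pendant_nodes) * (\<Sum>a\<in>pendant_nodes. green a a)
      - 2 * real (card V1) * (\<Sum>a\<in>pendant_nodes. \<Sum>b\<in>pendant_nodes. green a b)"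
    by (simp add: sum_lifted_distances[OF simple_graph_finite[OF simple1] finite_pendant_nodes]
        kirchhoff_double_sum[OF simple1 connected1])
  finally show ?thesis by simp
qed

end

theorem theorem4p3:
  fixes V1 :: "'a set" and E1 :: "'a set set"
    and n2 r2 :: nat and E2 :: "nat set set" and \<mu> :: "nat \<Rightarrow> real"
  assumes G1: "simple_graph V1 E1" "connected_graph V1 E1"
    and G2: "simple_graph {0..<n2} E2" "regular_graph {0..<n2} E2 r2" "r2 \<ge> 1"
    and eig: "char_poly (lap_matrix n2 E2) = (\<Prod>i<n2. [:- \<mu> i, 1:])"
  shows
   "(let n1 = real (card V1); m2 = real (card E2); n2' = real n2; r = real r2;
         C = lap_matrix n2 E2 + r \<cdot>\<^sub>m 1\<^sub>m n2;
         S = (\<Sum>i<n2. 1 / (\<mu> i + r))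
     in kirchhoff (corona_edge_V V1 {0..<n2} E2) (corona_edge_E V1 E1 {0..<n2} E2) =
        n1 * (1 + n2' + m2) *
          (n1 * m2 / 3
           + n1 / 3 * (mat_trace (the (mat_inverse C) * adj_matrix n2 E2) + r * S)
           + 3 * n1 * S
           + (m2 + n2' + 1) / n1 * kirchhoff V1 E1)
        - (n1 * m2 * r + n1 * n2' * (r + 3)^2) / (3 * r))"
proof -
  interpret corona n2 r2 E2 V1 E1 using G1 G2 by unfold_locales
  define n1 where "n1 = real (card V1)"
  define m2 where "m2 = real (card E2)"
  define r where "r = real r2"
  define S where "S = (\<Sum>i<n2. 1 / (\<mu> i + r))"
  define t where "t = mat_trace (Cinv * adj_matrix n2 E2)"
  have n1: "n1 > 0" unfolding n1_def using G1 simple_graph_finite[OF simple1]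
    unfolding connected_graph_def by (simp add: card_gt_0_iff)
  have r: "r > 0" unfolding r_def using degree_pos by simp
  have m2: "2 * m2 = real n2 * r" unfolding m2_def r_def by (rule card_E2)
  have trace: "mat_trace Cinv = S" unfolding S_def r_def by (rule mat_trace_Cinv[OF eig])
  have green_total: "(\<Sum>a\<in>pendant_nodes. \<Sum>b\<in>pendant_nodes. green a b)
      = (m2 * r + real n2 * (r + 3)^2) / (3 * r)"
    using sum_green r m2 unfolding m2_def r_def by (simp add: field_simps power2_eq_square)
  have KH: "kirchhoff VH EH = (1 + real n2 + m2)^2 * kirchhoff V1 E1
      + n1^2 * (1 + real n2 + m2) * (3 * S + m2 / 3 + (r * S + t) / 3)
      - n1 * ((m2 * r + real n2 * (r + 3)^2) / (3 * r))"
    using kirchhoff_H sum_green_diag card_pendant_nodes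
    unfolding green_total trace n1_def m2_def r_def t_def by (simp add: add.assoc)
  have Cinv_eq: "the (mat_inverse (lap_matrix n2 E2 + r \<cdot>\<^sub>m 1\<^sub>m n2)) = Cinv"
    unfolding Cinv_def Cmat_def r_def ..
  show ?thesis
    unfolding Let_def n1_def[symmetric] m2_def[symmetric] r_def[symmetric] S_def[symmetric]
    unfolding Cinv_eq t_def[symmetric] KH
    using n1 r by (simp add: field_simps power2_eq_square)
qed

end
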